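(* Let $k\ge 1$ and $n\ge 3$ be integers, let $\alpha<0$ be a real number, and let $G\in T_k(n)$. Then \[{}^0R_{\alpha}(G)\ge k(n-1)^{\alpha}+2(k+1)^{\alpha}+(n-k-2)(k+2)^{\alpha},\] and equality holds if and only if $G=K_k+P_{n-k}$.
   Context: All graphs are finite, simple, undirected and connected. For a graph $G$ and real $\alpha\neq 0$, the zeroth-order general Randić index is ${}^0R_{\alpha}(G)=\sum_{v\in V(G)}d(v)^{\alpha}$, where $d(v)$ is the degree of $v$. A connected graph $G$ is a $k$-generalized quasi tree if there is a subset $V_k\subset V(G)$ with $|V_k|=k$ such that $G-V_k$ is a tree, but for every subset $V_{k-1}\subset V(G)$ with $|V_{k-1}|=k-1$, $G-V_{k-1}$ is not a tree; the vertices of such a $V_k$ are called quasi vertices. $T_k(n)$ denotes the class of $k$-generalized quasi trees of order $n$. For vertex-disjoint graphs $G,H$, the join $G+H$ has vertex set $V(G)\cup V(H)$ and edge set $E(G)\cup E(H)\cup\{uv: u\in V(G), v\in V(H)\}$. $K_k$ is the complete graph on $k$ vertices and $P_m$ is the path on $m$ vertices. *)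

theory Defs
  imports Complex_Main
begin

type_synonym 'a graph = "'a set \<times> 'a set set"

definition verts :: "'a graph \<Rightarrow> 'a set" where "verts G = fst G"
definition edges :: "'a graph \<Rightarrow> 'a set set" where "edges G = snd G"

definition simple_graph :: "'a graph \<Rightarrow> bool" where
  "simple_graph G \<longleftrightarrow> finite (verts G) \<and>
     (\<forall>e\<in>edges G. \<exists>u v. u \<noteq> v \<and> u \<in> verts G \<and> v \<in> verts G \<and> e = {u, v})"

definition adj :: "'a graph \<Rightarrow> 'a \<Rightarrow> 'a \<Rightarrow> bool" where
  "adj G u v \<longleftrightarrow> {u, v} \<in> edges G"

definition degree :: "'a graph \<Rightarrow> 'a \<Rightarrow> nat" where
  "degree G v = card {u \<in> verts G. adj G u v}"

definition connected_graph :: "'a graph \<Rightarrow> bool" where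
  "connected_graph G \<longleftrightarrow> simple_graph G \<and> verts G \<noteq> {} \<and>
     (\<forall>u\<in>verts G. \<forall>v\<in>verts G. (adj G)\<^sup>*\<^sup>* u v)"

definition is_cycle :: "'a graph \<Rightarrow> 'a list \<Rightarrow> bool" where
  "is_cycle G cs \<longleftrightarrow> length cs \<ge> 3 \<and> distinct cs \<and> set cs \<subseteq> verts G \<and>
     (\<forall>i. Suc i < length cs \<longrightarrow> adj G (cs ! i) (cs ! Suc i)) \<and>
     adj G (last cs) (hd cs)"

definition acyclic_graph :: "'a graph \<Rightarrow> bool" where
  "acyclic_graph G \<longleftrightarrow> (\<nexists>cs. is_cycle G cs)"

definition is_tree :: "'a graph \<Rightarrow> bool" where
  "is_tree G \<longleftrightarrow> connected_graph G \<and> acyclic_graph G"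

definition del_verts :: "'a graph \<Rightarrow> 'a set \<Rightarrow> 'a graph" where
  "del_verts G S = (verts G - S, {e \<in> edges G. e \<inter> S = {}})"

definition quasi_tree :: "nat \<Rightarrow> 'a graph \<Rightarrow> bool" where
  "quasi_tree k G \<longleftrightarrow> connected_graph G \<and>
     (\<exists>S. S \<subset> verts G \<and> card S = k \<and> is_tree (del_verts G S)) \<and>
     (\<forall>S. S \<subset> verts G \<and> card S = k - 1 \<longrightarrow> \<not> is_tree (del_verts G S))"

definition T_class :: "nat \<Rightarrow> nat \<Rightarrow> 'a graph set" where
  "T_class k n = {G. quasi_tree k G \<and> card (verts G) = n}"

definition randic0 :: "real \<Rightarrow> 'a graph \<Rightarrow> real" where
  "randic0 \<alpha> G = (\<Sum>v\<in>verts G. real (degree G v) powr \<alpha>)"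

definition graph_iso :: "'a graph \<Rightarrow> 'b graph \<Rightarrow> bool" where
  "graph_iso G H \<longleftrightarrow> (\<exists>f. bij_betw f (verts G) (verts H) \<and>
     (\<forall>u\<in>verts G. \<forall>v\<in>verts G. adj G u v \<longleftrightarrow> adj H (f u) (f v)))"

definition complete_graph :: "nat \<Rightarrow> nat graph" where
  "complete_graph k = ({0..<k}, {{i, j} | i j. i < k \<and> j < k \<and> i \<noteq> j})"

definition path_graph :: "nat \<Rightarrow> nat graph" where
  "path_graph m = ({0..<m}, {{i, Suc i} | i. Suc i < m})"

definition graph_join :: "'a graph \<Rightarrow> 'b graph \<Rightarrow> ('a + 'b) graph" where
  "graph_join G H = (Inl ` verts G \<union> Inr ` verts H,
     ((`) Inl) ` edges G \<union> ((`) Inr) ` edges H \<union>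
     {{Inl u, Inr v} | u v. u \<in> verts G \<and> v \<in> verts H})"

end

theory Submission
  imports Defs
begin

text \<open>Let S be a set of k quasi-vertices, so that T = G - S is a tree on m = n - k vertices;
  the minimality of k forces m \<ge> 2. A quasi-vertex has degree at most n - 1, and a vertex v
  of T has degree at most k + d(v), where d(v) is its degree in T. For \<alpha> < 0 the map
  d \<mapsto> (k + d) powr \<alpha> is decreasing and strictly convex, so it lies above its chord through
  d = 1 and d = 2, strictly for d \<ge> 3. The chord is affine in d, so its sum over T depends only
  on the degree sum of T, which is at most 2m - 2. This gives the bound; equality forces every
  quasi-vertex to be adjacent to all other vertices and T to have maximum degree 2, i.e. to be
  a path, so G is K_k + P_m.\<close>

section \<open>Degrees and vertex deletion\<close>

lemma adj_commute: "adj G u v \<longleftrightarrow> adj G v u"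
  unfolding adj_def by (simp add: insert_commute)

lemma simple_graph_adjD:
  assumes "simple_graph G" "adj G u v"
  shows "u \<in> verts G" "v \<in> verts G" "u \<noteq> v"
  using assms unfolding simple_graph_def adj_def by (auto simp: doubleton_eq_iff)

lemma simple_graph_finite: "simple_graph G \<Longrightarrow> finite (verts G)"
  unfolding simple_graph_def by simp

lemma connected_graph_simple: "connected_graph G \<Longrightarrow> simple_graph G"
  unfolding connected_graph_def by simp

definition neighbours :: "'a graph \<Rightarrow> 'a \<Rightarrow> 'a set" where
  "neighbours G v = {u \<in> verts G. adj G u v}"

lemma degree_eq_card_neighbours: "degree G v = card (neighbours G v)"
  unfolding degree_def neighbours_def by simp

lemma neighbours_subset: "simple_graph G \<Longrightarrow> neighbours G v \<subseteq> verts G - {v}"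
  unfolding neighbours_def by (auto dest: simple_graph_adjD)

lemma finite_neighbours: "simple_graph G \<Longrightarrow> finite (neighbours G v)"
  unfolding neighbours_def by (auto dest: simple_graph_finite)

lemma degree_le_card_verts:
  assumes "simple_graph G" "v \<in> verts G"
  shows "degree G v \<le> card (verts G) - 1"
proof -
  have "degree G v \<le> card (verts G - {v})"
    unfolding degree_eq_card_neighbours
    using assms by (intro card_mono neighbours_subset) (auto dest: simple_graph_finite)
  then show ?thesis using assms(2) by simp
qed

lemma degree_eq_card_verts_imp_adj:
  assumes "simple_graph G" "degree G v = card (verts G) - 1" "v \<in> verts G" "u \<in> verts G" "u \<noteq> v"
  shows "adj G v u"
proof -
  have "neighbours G v = verts G - {v}"
    using assms by (intro card_subset_eq neighbours_subset)
      (auto simp: degree_eq_card_neighbours dest: simple_graph_finite)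
  then show ?thesis using assms(4,5) unfolding neighbours_def by (auto simp: adj_commute)
qed

lemma connected_graph_degree_pos:
  assumes "connected_graph G" "v \<in> verts G" "w \<in> verts G" "v \<noteq> w"
  shows "1 \<le> degree G v"
proof -
  have "(adj G)\<^sup>*\<^sup>* v w" using assms unfolding connected_graph_def by blast
  then obtain u where "adj G v u" using assms(4) by (metis converse_rtranclpE)
  with assms(1) have "u \<in> neighbours G v"
    unfolding neighbours_def by (auto simp: adj_commute dest: connected_graph_simple simple_graph_adjD)
  then show ?thesis using finite_neighbours[OF connected_graph_simple[OF assms(1)]]
    unfolding degree_eq_card_neighbours by (metis One_nat_def Suc_leI card_gt_0_iff empty_iff)
qed

lemma verts_del_verts [simp]: "verts (del_verts G S) = verts G - S"
  unfolding del_verts_def verts_def by simp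

lemma adj_del_verts: "adj (del_verts G S) u v \<longleftrightarrow> adj G u v \<and> u \<notin> S \<and> v \<notin> S"
  unfolding adj_def del_verts_def edges_def by auto

lemma simple_graph_del_verts: "simple_graph G \<Longrightarrow> simple_graph (del_verts G S)"
  unfolding simple_graph_def del_verts_def verts_def edges_def by fastforce

lemma acyclic_graph_del_verts: "acyclic_graph G \<Longrightarrow> acyclic_graph (del_verts G S)"
  unfolding acyclic_graph_def is_cycle_def by (auto simp: adj_del_verts)

lemma neighbours_del_verts: "neighbours (del_verts G S) v = neighbours G v - S" if "v \<notin> S"
  using that unfolding neighbours_def by (auto simp: adj_del_verts)

lemma degree_le_card_plus_degree_del_verts:
  assumes "simple_graph G" "finite S" "v \<notin> S"
  shows "degree G v \<le> card S + degree (del_verts G S) v"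
proof -
  have "degree G v \<le> card (S \<union> neighbours (del_verts G S) v)"
    unfolding degree_eq_card_neighbours neighbours_del_verts[OF assms(3)]
    using assms by (intro card_mono) (auto simp: finite_neighbours)
  also have "\<dots> \<le> card S + degree (del_verts G S) v"
    unfolding degree_eq_card_neighbours by (rule card_Un_le)
  finally show ?thesis .
qed

lemma degree_del_vertex:
  assumes "simple_graph G" "u \<noteq> v"
  shows "degree G u = degree (del_verts G {v}) u + (if adj G u v then 1 else 0)"
proof -
  have del: "degree (del_verts G {v}) u = card (neighbours G u - {v})"
    using assms(2) by (simp add: degree_eq_card_neighbours neighbours_del_verts)
  have iff: "v \<in> neighbours G u \<longleftrightarrow> adj G u v"
    using assms(1) unfolding neighbours_def by (auto simp: adj_commute dest: simple_graph_adjD)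
  show ?thesis
  proof (cases "adj G u v")
    case True
    then have "card (neighbours G u) = Suc (card (neighbours G u - {v}))"
      using iff by (intro card.remove finite_neighbours assms(1)) simp
    then show ?thesis using True del by (simp add: degree_eq_card_neighbours)
  next
    case False
    then have "neighbours G u - {v} = neighbours G u" using iff by blast
    then show ?thesis using False del by (simp add: degree_eq_card_neighbours)
  qed
qed

lemma sum_degree_del_vertex:
  assumes "simple_graph G" "v \<in> verts G"
  shows "(\<Sum>u\<in>verts G. degree G u)
       = (\<Sum>u\<in>verts G - {v}. degree (del_verts G {v}) u) + 2 * degree G v"
proof -
  have fin: "finite (verts G)" using assms(1) by (rule simple_graph_finite)
  have "(verts G - {v}) \<inter> {u. adj G u v} = neighbours G v"
    using neighbours_subset[OF assms(1), of v] unfolding neighbours_def by (auto simp: adj_commute)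
  then have adjacent: "(\<Sum>u\<in>verts G - {v}. if adj G u v then 1 else 0::nat) = degree G v"
    using fin by (simp add: sum.If_cases degree_eq_card_neighbours)
  have "(\<Sum>u\<in>verts G - {v}. degree G u)
      = (\<Sum>u\<in>verts G - {v}. degree (del_verts G {v}) u + (if adj G u v then 1 else 0))"
    using degree_del_vertex[OF assms(1)] by (intro sum.cong) auto
  also have "\<dots> = (\<Sum>u\<in>verts G - {v}. degree (del_verts G {v}) u) + degree G v"
    by (simp only: sum.distrib adjacent)
  finally show ?thesis using sum.remove[OF fin assms(2), of "degree G"] by simp
qed

section \<open>Paths in acyclic graphs\<close>

definition is_path :: "'a graph \<Rightarrow> 'a list \<Rightarrow> bool" where
  "is_path G ps \<longleftrightarrow> distinct ps \<and> set ps \<subseteq> verts G \<and>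
     (\<forall>i. Suc i < length ps \<longrightarrow> adj G (ps ! i) (ps ! Suc i))"

lemma is_path_length_le: "simple_graph G \<Longrightarrow> is_path G ps \<Longrightarrow> length ps \<le> card (verts G)"
  unfolding is_path_def by (metis card_mono distinct_card simple_graph_finite)

lemma longest_path_exists:
  assumes "simple_graph G" "adj G a b"
  obtains ps where "is_path G ps" "2 \<le> length ps" "\<And>qs. is_path G qs \<Longrightarrow> length qs \<le> length ps"
proof -
  have "is_path G [a, b]"
    using assms simple_graph_adjD[OF assms] unfolding is_path_def by (auto simp: less_Suc_eq)
  then have start: "is_path G [a, b] \<and> 2 \<le> length [a, b]" by simp
  have "\<forall>ps. is_path G ps \<and> 2 \<le> length ps \<longrightarrow> length ps < Suc (card (verts G))"
    using is_path_length_le[OF assms(1)] by (simp add: less_Suc_eq_le)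
  from ex_has_greatest_nat[OF start this] obtain ps where ps: "is_path G ps" "2 \<le> length ps"
    and longest: "\<And>qs. is_path G qs \<and> 2 \<le> length qs \<Longrightarrow> length qs \<le> length ps"
    by blast
  have "length qs \<le> length ps" if "is_path G qs" for qs
    using ps longest that by (metis le_trans nat_le_linear)
  with ps show ?thesis by (rule that)
qed

lemma is_path_snoc:
  assumes "is_path G ps" "ps \<noteq> []" "u \<notin> set ps" "u \<in> verts G" "adj G (last ps) u"
  shows "is_path G (ps @ [u])"
  unfolding is_path_def
proof (intro conjI allI impI)
  show "distinct (ps @ [u])" "set (ps @ [u]) \<subseteq> verts G"
    using assms unfolding is_path_def by auto
  fix i assume i: "Suc i < length (ps @ [u])"
  show "adj G ((ps @ [u]) ! i) ((ps @ [u]) ! Suc i)"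
  proof (cases "Suc i < length ps")
    case True
    then show ?thesis using assms(1) unfolding is_path_def by (simp add: nth_append)
  next
    case False
    then have "i = length ps - 1" using i by simp
    then show ?thesis using assms(2,5) False by (simp add: nth_append last_conv_nth)
  qed
qed

lemma is_path_Cons:
  assumes "is_path G ps" "ps \<noteq> []" "u \<notin> set ps" "u \<in> verts G" "adj G u (hd ps)"
  shows "is_path G (u # ps)"
  unfolding is_path_def
proof (intro conjI allI impI)
  show "distinct (u # ps)" "set (u # ps) \<subseteq> verts G"
    using assms unfolding is_path_def by auto
  fix i assume "Suc i < length (u # ps)"
  then show "adj G ((u # ps) ! i) ((u # ps) ! Suc i)"
    using assms(1,2,5) unfolding is_path_def by (cases i) (auto simp: hd_conv_nth)
qed

lemma is_path_chord_imp_cycle: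
  assumes "is_path G ps" "i + 2 \<le> j" "j < length ps" "adj G (ps ! j) (ps ! i)"
  shows "is_cycle G (take (j - i + 1) (drop i ps))"
proof -
  let ?cs = "take (j - i + 1) (drop i ps)"
  have len: "length ?cs = j - i + 1" using assms by simp
  have nth: "?cs ! l = ps ! (i + l)" if "l < j - i + 1" for l using assms that by simp
  have "last ?cs = ps ! j" "hd ?cs = ps ! i"
    using len nth[of "j - i"] nth[of 0] assms by (auto simp: last_conv_nth hd_conv_nth)
  moreover have "set ?cs \<subseteq> verts G"
    using assms(1) unfolding is_path_def by (meson order.trans set_drop_subset set_take_subset)
  moreover have "adj G (?cs ! l) (?cs ! Suc l)" if "Suc l < length ?cs" for l
    using assms(1) that len nth unfolding is_path_def by auto
  ultimately show ?thesis
    using assms len unfolding is_cycle_def is_path_def by (auto simp: distinct_take)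
qed

lemma acyclic_is_path_adj_iff:
  assumes "simple_graph G" "acyclic_graph G" "is_path G ps" "i < length ps" "j < length ps"
  shows "adj G (ps ! i) (ps ! j) \<longleftrightarrow> Suc i = j \<or> Suc j = i"
proof
  assume adj: "adj G (ps ! i) (ps ! j)"
  have "\<not> is_cycle G cs" for cs using assms(2) unfolding acyclic_graph_def by blast
  then have "\<not> i + 2 \<le> j" "\<not> j + 2 \<le> i"
    using is_path_chord_imp_cycle[OF assms(3) _ assms(5), of i] adj
      is_path_chord_imp_cycle[OF assms(3) _ assms(4), of j] by (auto simp: adj_commute)
  moreover have "i \<noteq> j" using simple_graph_adjD(3)[OF assms(1) adj] by auto
  ultimately show "Suc i = j \<or> Suc j = i" by linarith
next
  assume "Suc i = j \<or> Suc j = i"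
  then show "adj G (ps ! i) (ps ! j)"
    using assms(3-5) unfolding is_path_def by (auto simp: adj_commute)
qed

lemma longest_path_last_neighbours:
  assumes "simple_graph G" "acyclic_graph G" "is_path G ps" "2 \<le> length ps"
    and longest: "\<And>qs. is_path G qs \<Longrightarrow> length qs \<le> length ps"
  shows "neighbours G (last ps) \<subseteq> {ps ! (length ps - 2)}"
proof
  fix u assume u: "u \<in> neighbours G (last ps)"
  then have adj: "adj G (last ps) u" "u \<in> verts G"
    unfolding neighbours_def by (auto simp: adj_commute)
  have ne: "ps \<noteq> []" using assms(4) by auto
  have "u \<in> set ps"
  proof (rule ccontr)
    assume "u \<notin> set ps"
    then have "is_path G (ps @ [u])" using is_path_snoc[OF assms(3) ne _ adj(2,1)] by simp
    then show False using longest by fastforce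
  qed
  then obtain i where i: "i < length ps" "u = ps ! i" by (metis in_set_conv_nth)
  have "adj G (ps ! (length ps - 1)) (ps ! i)" using adj(1) i ne by (simp add: last_conv_nth)
  then have "i = length ps - 2"
    using acyclic_is_path_adj_iff[OF assms(1-3), of "length ps - 1" i] i(1) ne by auto
  then show "u \<in> {ps ! (length ps - 2)}" using i by simp
qed

lemma acyclic_graph_has_leaf:
  assumes "simple_graph G" "acyclic_graph G" "verts G \<noteq> {}"
  obtains v where "v \<in> verts G" "degree G v \<le> 1"
proof (cases "\<exists>a b. adj G a b")
  case False
  obtain v where "v \<in> verts G" using assms(3) by blast
  moreover have "degree G v = 0"
    using False unfolding degree_eq_card_neighbours neighbours_def by auto
  ultimately show ?thesis using that by simp
next
  case True
  then obtain a b where ab: "adj G a b" by blast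
  obtain ps where ps: "is_path G ps" "2 \<le> length ps"
    and longest: "\<And>qs. is_path G qs \<Longrightarrow> length qs \<le> length ps"
    by (rule longest_path_exists[OF assms(1) ab]) blast
  have "ps \<noteq> []" using ps(2) by auto
  then have "last ps \<in> verts G" using ps(1) unfolding is_path_def by auto
  moreover have "degree G (last ps) \<le> 1"
    using card_mono[OF _ longest_path_last_neighbours[OF assms(1,2) ps longest]]
    by (simp add: degree_eq_card_neighbours)
  ultimately show ?thesis by (rule that)
qed

lemma sum_degree_acyclic_le:
  assumes "simple_graph G" "acyclic_graph G" "verts G \<noteq> {}"
  shows "(\<Sum>v\<in>verts G. degree G v) + 2 \<le> 2 * card (verts G)"
  using assms
proof (induction "card (verts G)" arbitrary: G)
  case 0
  then show ?case by (simp add: simple_graph_finite)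
next
  case (Suc N)
  obtain v where v: "v \<in> verts G" "degree G v \<le> 1"
    using acyclic_graph_has_leaf[OF Suc.prems] by blast
  show ?case
  proof (cases "verts G = {v}")
    case True
    then have "degree G v = 0"
      using neighbours_subset[OF Suc.prems(1), of v] by (simp add: degree_eq_card_neighbours)
    with True show ?thesis by simp
  next
    case False
    let ?H = "del_verts G {v}"
    have "N = card (verts ?H)"
      using Suc.hyps(2) v(1) simple_graph_finite[OF Suc.prems(1)] by simp
    moreover have "verts ?H \<noteq> {}" using False v(1) by auto
    ultimately have "(\<Sum>u\<in>verts ?H. degree ?H u) + 2 \<le> 2 * card (verts ?H)"
      using Suc.hyps(1) simple_graph_del_verts[OF Suc.prems(1)]
        acyclic_graph_del_verts[OF Suc.prems(2)] by blast
    then show ?thesis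
      using sum_degree_del_vertex[OF Suc.prems(1) v(1)] v(2) \<open>N = card (verts ?H)\<close> Suc.hyps(2)
      by simp
  qed
qed

lemma rtranclp_adj_leaves_set:
  assumes "(adj G)\<^sup>*\<^sup>* a b" "a \<in> A" "b \<notin> A"
  obtains x y where "x \<in> A" "y \<notin> A" "adj G x y"
  using assms by (induction rule: rtranclp_induct) blast+

lemma longest_path_covers_verts:
  assumes "connected_graph G" "\<forall>v\<in>verts G. degree G v \<le> 2" "is_path G ps" "2 \<le> length ps"
    and longest: "\<And>qs. is_path G qs \<Longrightarrow> length qs \<le> length ps"
  shows "set ps = verts G"
proof (rule ccontr)
  have simple: "simple_graph G" using assms(1) by (rule connected_graph_simple)
  have sub: "set ps \<subseteq> verts G" and ne: "ps \<noteq> []" using assms(3,4) unfolding is_path_def by auto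
  assume "set ps \<noteq> verts G"
  then obtain w where "w \<in> verts G" "w \<notin> set ps" using sub by blast
  moreover have "hd ps \<in> set ps" using ne by simp
  ultimately have "(adj G)\<^sup>*\<^sup>* (hd ps) w" using assms(1) sub unfolding connected_graph_def by blast
  then obtain x y where xy: "x \<in> set ps" "y \<notin> set ps" "adj G x y"
    by (rule rtranclp_adj_leaves_set) (use ne \<open>w \<notin> set ps\<close> in simp_all)
  have y: "y \<in> verts G" using simple_graph_adjD[OF simple xy(3)] by simp
  obtain i where i: "i < length ps" "x = ps ! i" using xy(1) by (metis in_set_conv_nth)
  have "i \<noteq> length ps - 1"
  proof
    assume "i = length ps - 1"
    then have "is_path G (ps @ [y])"
      using is_path_snoc[OF assms(3) ne xy(2) y] xy(3) i ne by (simp add: last_conv_nth)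
    then show False using longest by fastforce
  qed
  moreover have "i \<noteq> 0"
  proof
    assume "i = 0"
    then have "is_path G (y # ps)"
      using is_path_Cons[OF assms(3) ne xy(2) y] xy(3) i ne by (simp add: hd_conv_nth adj_commute)
    then show False using longest by fastforce
  qed
  ultimately have i': "0 < i" "Suc i < length ps" using i by auto
  let ?N = "{ps ! (i - 1), ps ! Suc i, y}"
  have "adj G (ps ! (i - 1)) x" "adj G (ps ! Suc i) x"
    using assms(3) i i' unfolding is_path_def by (auto simp: adj_commute dest: spec[of _ "i - 1"])
  then have "?N \<subseteq> neighbours G x"
    using xy(3) y sub i' unfolding neighbours_def by (auto simp: adj_commute)
  moreover have "ps ! (i - 1) \<noteq> ps ! Suc i" "y \<notin> {ps ! (i - 1), ps ! Suc i}"
    using assms(3) i' xy(2) unfolding is_path_def by (auto simp: nth_eq_iff_index_eq)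
  then have "card ?N = 3" by (auto simp: card_insert_if)
  ultimately have "3 \<le> degree G x"
    unfolding degree_eq_card_neighbours by (metis card_mono finite_neighbours simple)
  then show False using assms(2) sub xy(1) by fastforce
qed

lemma is_tree_two_verts:
  assumes "simple_graph H" "verts H = {u, v}" "adj H u v"
  shows "is_tree H"
proof -
  have "(adj H)\<^sup>*\<^sup>* x y" if "x \<in> {u, v}" "y \<in> {u, v}" for x y
    using that assms(3) adj_commute[of H u v] by auto
  moreover have "\<not> is_cycle H cs" for cs
  proof
    assume "is_cycle H cs"
    then have "3 \<le> length cs" "length cs \<le> card {u, v}"
      using assms(2) unfolding is_cycle_def by (auto intro: card_mono simp flip: distinct_card)
    moreover have "card {u, v} \<le> 2" by (simp add: card_insert_if)
    ultimately show False by simp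
  qed
  ultimately show ?thesis
    using assms(1,2) unfolding is_tree_def connected_graph_def acyclic_graph_def by auto
qed

section \<open>Isomorphisms, complete graphs, paths and joins\<close>

lemma graph_iso_sym:
  assumes "graph_iso G H"
  shows "graph_iso H G"
proof -
  obtain f where f: "bij_betw f (verts G) (verts H)"
    and adj: "\<forall>u\<in>verts G. \<forall>v\<in>verts G. adj G u v \<longleftrightarrow> adj H (f u) (f v)"
    using assms unfolding graph_iso_def by blast
  let ?g = "inv_into (verts G) f"
  have "\<forall>u\<in>verts H. \<forall>v\<in>verts H. adj H u v \<longleftrightarrow> adj G (?g u) (?g v)"
    using adj f by (auto simp: bij_betw_def f_inv_into_f inv_into_into)
  with bij_betw_inv_into[OF f] show ?thesis unfolding graph_iso_def by blast
qed

lemma degree_graph_iso: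
  assumes f: "bij_betw f (verts G) (verts H)"
    and adj: "\<forall>u\<in>verts G. \<forall>v\<in>verts G. adj G u v \<longleftrightarrow> adj H (f u) (f v)"
    and v: "v \<in> verts G"
  shows "degree H (f v) = degree G v"
proof -
  have "neighbours H (f v) = f ` neighbours G v"
    using f adj v unfolding neighbours_def bij_betw_def by fastforce
  moreover have "inj_on f (neighbours G v)"
    using f unfolding bij_betw_def neighbours_def by (auto intro: inj_on_subset)
  ultimately show ?thesis by (simp add: degree_eq_card_neighbours card_image)
qed

lemma randic0_graph_iso:
  assumes "graph_iso G H"
  shows "randic0 \<alpha> G = randic0 \<alpha> H"
proof -
  obtain f where f: "bij_betw f (verts G) (verts H)"
    and adj: "\<forall>u\<in>verts G. \<forall>v\<in>verts G. adj G u v \<longleftrightarrow> adj H (f u) (f v)"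
    using assms unfolding graph_iso_def by blast
  have "randic0 \<alpha> H = (\<Sum>v\<in>verts G. real (degree H (f v)) powr \<alpha>)"
    unfolding randic0_def by (rule sum.reindex_bij_betw[OF f, symmetric])
  also have "\<dots> = randic0 \<alpha> G"
    unfolding randic0_def by (simp add: degree_graph_iso[OF f adj])
  finally show ?thesis by simp
qed

lemma verts_path_graph [simp]: "verts (path_graph m) = {0..<m}"
  unfolding path_graph_def verts_def by simp

lemma adj_path_graph: "adj (path_graph m) i j \<longleftrightarrow> (Suc i = j \<and> j < m) \<or> (Suc j = i \<and> i < m)"
  unfolding adj_def path_graph_def edges_def by (auto simp: doubleton_eq_iff)

lemma verts_complete_graph [simp]: "verts (complete_graph k) = {0..<k}"
  unfolding complete_graph_def verts_def by simp

lemma adj_complete_graph: "adj (complete_graph k) i j \<longleftrightarrow> i < k \<and> j < k \<and> i \<noteq> j"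
  unfolding adj_def complete_graph_def edges_def by (auto simp: doubleton_eq_iff)

lemma tree_max_degree_two_iso_path:
  assumes "is_tree G" "\<forall>v\<in>verts G. degree G v \<le> 2" "2 \<le> card (verts G)"
  shows "graph_iso G (path_graph (card (verts G)))"
proof -
  have conn: "connected_graph G" and acyc: "acyclic_graph G" and simple: "simple_graph G"
    using assms(1) unfolding is_tree_def connected_graph_def by auto
  obtain a b where ab: "a \<in> verts G" "b \<in> verts G" "a \<noteq> b"
    using assms(3) card_le_Suc0_iff_eq[OF simple_graph_finite[OF simple]] by auto
  then have "neighbours G a \<noteq> {}"
    using connected_graph_degree_pos[OF conn] by (fastforce simp: degree_eq_card_neighbours)
  then obtain u where "adj G u a" unfolding neighbours_def by blast
  then obtain ps where ps: "is_path G ps" "2 \<le> length ps"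
    and longest: "\<And>qs. is_path G qs \<Longrightarrow> length qs \<le> length ps"
    by (rule longest_path_exists[OF simple]) blast
  have set_ps: "set ps = verts G"
    using longest_path_covers_verts[OF conn assms(2) ps longest] .
  have len: "length ps = card (verts G)"
    using ps(1) set_ps unfolding is_path_def by (metis distinct_card)
  have "bij_betw ((!) ps) (verts (path_graph (card (verts G)))) (verts G)"
    using ps(1) set_ps len unfolding is_path_def by (intro bij_betw_nth) auto
  moreover have "\<forall>i\<in>verts (path_graph (card (verts G))). \<forall>j\<in>verts (path_graph (card (verts G))).
      adj (path_graph (card (verts G))) i j \<longleftrightarrow> adj G (ps ! i) (ps ! j)"
    using acyclic_is_path_adj_iff[OF simple acyc ps(1)] len by (auto simp: adj_path_graph)
  ultimately have "graph_iso (path_graph (card (verts G))) G" unfolding graph_iso_def by blast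
  then show ?thesis by (rule graph_iso_sym)
qed

lemma verts_graph_join: "verts (graph_join A B) = Inl ` verts A \<union> Inr ` verts B"
  unfolding graph_join_def verts_def by simp

lemma adj_graph_join:
  "adj (graph_join A B) x y \<longleftrightarrow> {x, y} \<in> (`) Inl ` edges A \<or> {x, y} \<in> (`) Inr ` edges B \<or>
     (\<exists>u\<in>verts A. \<exists>v\<in>verts B. {x, y} = {Inl u, Inr v})"
  unfolding adj_def graph_join_def edges_def verts_def snd_conv Un_iff by blast

lemma adj_graph_join_Inl_Inl: "adj (graph_join A B) (Inl a) (Inl a') \<longleftrightarrow> adj A a a'"
proof -
  have "{Inl a, Inl a'} = Inl ` {a, a'}" by simp
  moreover have "inj ((`) Inl)" by (simp add: inj_def inj_image_eq_iff)
  ultimately have "{Inl a, Inl a'} \<in> (`) Inl ` edges A \<longleftrightarrow> {a, a'} \<in> edges A"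
    by (metis inj_image_mem_iff)
  moreover have "Inl a \<notin> Inr ` e" for e :: "'b set" by blast
  ultimately show ?thesis unfolding adj_graph_join by (auto simp: adj_def doubleton_eq_iff)
qed

lemma adj_graph_join_Inr_Inr: "adj (graph_join A B) (Inr b) (Inr b') \<longleftrightarrow> adj B b b'"
proof -
  have "{Inr b, Inr b'} = Inr ` {b, b'}" by simp
  moreover have "inj ((`) Inr)" by (simp add: inj_def inj_image_eq_iff)
  ultimately have "{Inr b, Inr b'} \<in> (`) Inr ` edges B \<longleftrightarrow> {b, b'} \<in> edges B"
    by (metis inj_image_mem_iff)
  moreover have "Inr b \<notin> Inl ` e" for e :: "'a set" by blast
  ultimately show ?thesis unfolding adj_graph_join by (auto simp: adj_def doubleton_eq_iff)
qed

lemma adj_graph_join_Inl_Inr: "adj (graph_join A B) (Inl a) (Inr b) \<longleftrightarrow> a \<in> verts A \<and> b \<in> verts B"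
proof -
  have "Inl a \<notin> Inr ` e" "Inr b \<notin> Inl ` e'" for e e' by blast+
  then show ?thesis unfolding adj_graph_join by (auto simp: doubleton_eq_iff)
qed

lemma neighbours_graph_join_Inl:
  assumes "a \<in> verts A"
  shows "neighbours (graph_join A B) (Inl a) = Inl ` neighbours A a \<union> Inr ` verts B"
  using assms unfolding neighbours_def verts_graph_join
  by (auto simp: adj_graph_join_Inl_Inl adj_graph_join_Inl_Inr adj_commute[of "graph_join A B" "Inr _"])

lemma neighbours_graph_join_Inr:
  assumes "b \<in> verts B"
  shows "neighbours (graph_join A B) (Inr b) = Inl ` verts A \<union> Inr ` neighbours B b"
  using assms unfolding neighbours_def verts_graph_join
  by (auto simp: adj_graph_join_Inr_Inr adj_graph_join_Inl_Inr)

lemma card_Inl_Un_Inr: "finite X \<Longrightarrow> finite Y \<Longrightarrow> card (Inl ` X \<union> Inr ` Y) = card X + card Y"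
  by (subst card_Un_disjoint) (auto simp: card_image)

lemma degree_graph_join_Inl:
  assumes "simple_graph A" "finite (verts B)" "a \<in> verts A"
  shows "degree (graph_join A B) (Inl a) = degree A a + card (verts B)"
  using assms by (simp add: degree_eq_card_neighbours neighbours_graph_join_Inl card_Inl_Un_Inr finite_neighbours)

lemma degree_graph_join_Inr:
  assumes "finite (verts A)" "simple_graph B" "b \<in> verts B"
  shows "degree (graph_join A B) (Inr b) = card (verts A) + degree B b"
  using assms by (simp add: degree_eq_card_neighbours neighbours_graph_join_Inr card_Inl_Un_Inr finite_neighbours)

lemma simple_graph_complete_graph: "simple_graph (complete_graph k)"
  unfolding simple_graph_def complete_graph_def verts_def edges_def by auto

lemma simple_graph_path_graph: "simple_graph (path_graph m)"
proof -
  have "\<exists>u v. u \<noteq> v \<and> u < m \<and> v < m \<and> {i, Suc i} = {u, v}" if "Suc i < m" for i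
    using that by (intro exI[of _ i] exI[of _ "Suc i"]) simp
  then show ?thesis unfolding simple_graph_def path_graph_def verts_def edges_def by auto
qed

lemma degree_complete_graph: "i < k \<Longrightarrow> degree (complete_graph k) i = k - 1"
proof -
  assume "i < k"
  then have "neighbours (complete_graph k) i = {0..<k} - {i}"
    unfolding neighbours_def by (auto simp: adj_complete_graph)
  with \<open>i < k\<close> show ?thesis by (simp add: degree_eq_card_neighbours)
qed

lemma degree_path_graph:
  assumes "2 \<le> m" "j < m"
  shows "degree (path_graph m) j = (if j = 0 \<or> j = m - 1 then 1 else 2)"
proof -
  have "neighbours (path_graph m) j = {i. i < m \<and> (Suc i = j \<or> Suc j = i)}"
    using assms(2) unfolding neighbours_def by (auto simp: adj_path_graph)
  also have "\<dots> = (if j = 0 then {1} else if j = m - 1 then {j - 1} else {j - 1, j + 1})"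
    using assms by auto
  finally show ?thesis using assms by (simp add: degree_eq_card_neighbours)
qed

lemma sum_degree_path_graph:
  fixes f :: "nat \<Rightarrow> 'b::comm_semiring_1"
  assumes "2 \<le> m"
  shows "(\<Sum>j<m. f (degree (path_graph m) j)) = 2 * f 1 + of_nat (m - 2) * f 2"
proof -
  obtain r where m: "m = Suc (Suc r)" using assms by (metis add_2_eq_Suc le_Suc_ex)
  have ends: "degree (path_graph m) 0 = 1" "degree (path_graph m) (Suc r) = 1"
    using assms by (simp_all add: degree_path_graph m)
  have "(\<Sum>j<m. f (degree (path_graph m) j))
      = f (degree (path_graph m) 0) + (\<Sum>j\<in>{1..<Suc r}. f (degree (path_graph m) j))
        + f (degree (path_graph m) (Suc r))"
    unfolding m lessThan_atLeast0 sum.atLeast0_lessThan_Suc[of _ "Suc r"]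
    by (simp only: sum.atLeast_Suc_lessThan[of 0 "Suc r"] zero_less_Suc One_nat_def)
  also have "(\<Sum>j\<in>{1..<Suc r}. f (degree (path_graph m) j)) = of_nat r * f 2"
    using assms by (simp add: degree_path_graph m)
  moreover have "m - 2 = r" by (simp add: m)
  ultimately show ?thesis unfolding ends by (simp add: mult_2 algebra_simps)
qed

lemma randic0_join_complete_path:
  assumes "2 \<le> m"
  shows "randic0 \<alpha> (graph_join (complete_graph k) (path_graph m))
    = real k * (real k + real m - 1) powr \<alpha> + 2 * (real k + 1) powr \<alpha> + (real m - 2) * (real k + 2) powr \<alpha>"
proof -
  let ?J = "graph_join (complete_graph k) (path_graph m)"
  have "randic0 \<alpha> ?J = (\<Sum>i<k. real (degree ?J (Inl i)) powr \<alpha>) + (\<Sum>j<m. real (degree ?J (Inr j)) powr \<alpha>)"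
    unfolding randic0_def verts_graph_join
    by (subst sum.union_disjoint) (auto simp: sum.reindex lessThan_atLeast0)
  also have "(\<Sum>i<k. real (degree ?J (Inl i)) powr \<alpha>) = real k * (real k + real m - 1) powr \<alpha>"
    by (cases k) (simp_all add: degree_graph_join_Inl simple_graph_complete_graph degree_complete_graph)
  also have "(\<Sum>j<m. real (degree ?J (Inr j)) powr \<alpha>) = (\<Sum>j<m. real (k + degree (path_graph m) j) powr \<alpha>)"
    by (simp add: degree_graph_join_Inr simple_graph_path_graph)
  also have "\<dots> = 2 * (real k + 1) powr \<alpha> + (real m - 2) * (real k + 2) powr \<alpha>"
    using sum_degree_path_graph[OF assms, of "\<lambda>d. real (k + d) powr \<alpha>"] assms by (simp add: of_nat_diff add.commute)
  finally show ?thesis by simp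
qed

lemma bij_betw_image_Inl: "bij_betw f A B \<Longrightarrow> bij_betw (Inl \<circ> f) A (Inl ` B)"
  by (rule bij_betw_trans) (auto intro: inj_on_imp_bij_betw)

lemma bij_betw_image_Inr: "bij_betw f A B \<Longrightarrow> bij_betw (Inr \<circ> f) A (Inr ` B)"
  by (rule bij_betw_trans) (auto intro: inj_on_imp_bij_betw)

lemma graph_iso_join_complete:
  assumes simple: "simple_graph G" and S: "S \<subseteq> verts G"
    and full: "\<forall>u\<in>S. \<forall>v\<in>verts G. u \<noteq> v \<longrightarrow> adj G u v"
    and iso: "graph_iso (del_verts G S) H"
  shows "graph_iso G (graph_join (complete_graph (card S)) H)"
proof -
  have "finite S" using S simple_graph_finite[OF simple] by (rule finite_subset)
  then obtain s where s: "bij_betw s S {0..<card S}" using ex_bij_betw_finite_nat by blast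
  obtain h where h: "bij_betw h (verts G - S) (verts H)"
    and adj_h: "\<forall>u\<in>verts G - S. \<forall>v\<in>verts G - S. adj (del_verts G S) u v \<longleftrightarrow> adj H (h u) (h v)"
    using iso unfolding graph_iso_def by auto
  define f where "f v = (if v \<in> S then Inl (s v) else Inr (h v))" for v
  have "bij_betw f S (Inl ` {0..<card S})"
    using bij_betw_image_Inl[OF s] by (rule bij_betw_cong[THEN iffD1, rotated]) (simp add: f_def)
  moreover have "bij_betw f (verts G - S) (Inr ` verts H)"
    using bij_betw_image_Inr[OF h] by (rule bij_betw_cong[THEN iffD1, rotated]) (simp add: f_def)
  ultimately have "bij_betw f (S \<union> (verts G - S)) (Inl ` {0..<card S} \<union> Inr ` verts H)"
    by (rule bij_betw_combine) blast
  then have bij: "bij_betw f (verts G) (verts (graph_join (complete_graph (card S)) H))"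
    using S by (simp add: verts_graph_join Un_absorb1)
  have s_inj: "s u = s v \<longleftrightarrow> u = v" if "u \<in> S" "v \<in> S" for u v
    using s that unfolding bij_betw_def inj_on_def by blast
  have s_range: "s u < card S" if "u \<in> S" for u using s that by (auto dest: bij_betw_apply)
  have h_range: "h u \<in> verts H" if "u \<in> verts G - S" for u using h that by (rule bij_betw_apply)
  have "adj G u v \<longleftrightarrow> adj (graph_join (complete_graph (card S)) H) (f u) (f v)"
    if uv: "u \<in> verts G" "v \<in> verts G" for u v
  proof (cases "u \<in> S"; cases "v \<in> S")
    assume "u \<in> S" "v \<in> S"
    then show ?thesis
      using uv full s_inj s_range simple_graph_adjD(3)[OF simple, of u v]
      by (auto simp: f_def adj_graph_join_Inl_Inl adj_complete_graph)
  next
    assume "u \<in> S" "v \<notin> S"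
    then show ?thesis
      using uv full s_range h_range by (auto simp: f_def adj_graph_join_Inl_Inr)
  next
    assume "u \<notin> S" "v \<in> S"
    then show ?thesis
      using uv full s_range h_range
      by (auto simp: f_def adj_commute[of G u] adj_commute[of _ "Inr _"] adj_graph_join_Inl_Inr)
  next
    assume "u \<notin> S" "v \<notin> S"
    then show ?thesis
      using uv adj_h by (auto simp: f_def adj_graph_join_Inr_Inr adj_del_verts)
  qed
  with bij show ?thesis unfolding graph_iso_def by blast
qed

section \<open>Convexity of negative powers\<close>

lemma powr_midpoint_strict_convex:
  fixes a x :: real
  assumes "a < 0" "0 < x"
  shows "2 * (x + 1) powr a < x powr a + (x + 2) powr a"
proof -
  let ?p = "x powr (a / 2)" and ?q = "(x + 2) powr (a / 2)"
  have "x powr a = ?p\<^sup>2" "(x + 2) powr a = ?q\<^sup>2"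
    using assms by (simp_all add: power2_eq_square powr_add[symmetric])
  moreover have "2 * (?p * ?q) \<le> ?p\<^sup>2 + ?q\<^sup>2"
    using sum_squares_bound[of ?p ?q] by (simp add: mult.assoc)
  moreover have "(x + 1) powr a = ((x + 1) * (x + 1)) powr (a / 2)"
    using assms by (simp add: powr_mult powr_add[symmetric])
  moreover have "((x + 1) * (x + 1)) powr (a / 2) < (x * (x + 2)) powr (a / 2)"
    using assms by (intro powr_less_mono2_neg) (simp_all add: algebra_simps add_pos_pos)
  moreover have "(x * (x + 2)) powr (a / 2) = ?p * ?q"
    using assms by (simp add: powr_mult)
  ultimately show ?thesis by linarith
qed

lemma powr_increment_gt:
  fixes a b :: real
  assumes "a < 0" "0 < b" "2 \<le> j"
  shows "(b + 2) powr a - (b + 1) powr a < (b + real j + 1) powr a - (b + real j) powr a"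
  using assms(3)
proof (induction j rule: nat_induct_at_least)
  case base
  show ?case using powr_midpoint_strict_convex[OF assms(1), of "b + 1"] assms(2)
    by (simp add: add.assoc)
next
  case (Suc j)
  then show ?case using powr_midpoint_strict_convex[OF assms(1), of "b + real j"] assms(2)
    by (simp add: algebra_simps)
qed

text \<open>The chord of d \<mapsto> (b + d) powr \<alpha> through d = 1 and d = 2, as a function of d.\<close>
definition powr_chord :: "real \<Rightarrow> real \<Rightarrow> nat \<Rightarrow> real" where
  "powr_chord \<alpha> b d = (b + 2) powr \<alpha> - (real d - 2) * ((b + 1) powr \<alpha> - (b + 2) powr \<alpha>)"

lemma powr_chord_less:
  assumes "\<alpha> < 0" "0 < b" "3 \<le> d"
  shows "powr_chord \<alpha> b d < (b + real d) powr \<alpha>"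
  using assms(3)
proof (induction d rule: nat_induct_at_least)
  case base
  show ?case using powr_midpoint_strict_convex[OF assms(1), of "b + 1"] assms(2)
    by (simp add: powr_chord_def add.assoc)
next
  case (Suc d)
  then show ?case using powr_increment_gt[OF assms(1,2), of d]
    by (simp add: powr_chord_def algebra_simps)
qed

lemma powr_chord_le:
  assumes "\<alpha> < 0" "0 < b" "1 \<le> d"
  shows "powr_chord \<alpha> b d \<le> (b + real d) powr \<alpha>"
proof (cases "3 \<le> d")
  case True
  then show ?thesis using powr_chord_less[OF assms(1,2)] by fastforce
next
  case False
  with assms(3) have "d = 1 \<or> d = 2" by auto
  then show ?thesis by (auto simp: powr_chord_def)
qed

section \<open>Graphs that become a tree after deleting a vertex set\<close>

definition quasi_tree_bound :: "real \<Rightarrow> nat \<Rightarrow> nat \<Rightarrow> real" where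
  "quasi_tree_bound \<alpha> k n = real k * (real n - 1) powr \<alpha> + 2 * real (k + 1) powr \<alpha>
     + (real n - real k - 2) * real (k + 2) powr \<alpha>"

locale tree_deletion =
  fixes G :: "'a graph" and S :: "'a set"
  assumes connected: "connected_graph G"
    and S_subset: "S \<subseteq> verts G" and S_nonempty: "S \<noteq> {}"
    and tree_del_verts: "is_tree (del_verts G S)"
    and two_le_card_rest: "2 \<le> card (verts G - S)"
begin

lemma simple: "simple_graph G"
  using connected by (rule connected_graph_simple)

lemma finite_S: "finite S"
  using S_subset simple_graph_finite[OF simple] by (rule finite_subset)

lemma card_verts: "card (verts G) = card S + card (verts G - S)"
  using S_subset finite_S simple_graph_finite[OF simple]
  by (metis card_Diff_subset card_mono le_add_diff_inverse)

lemma degree_pos: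
  assumes "v \<in> verts G"
  shows "1 \<le> degree G v"
proof -
  have "\<not> verts G \<subseteq> {v}"
    using card_mono[of "{v}" "verts G"] card_verts S_nonempty finite_S two_le_card_rest by auto
  then show ?thesis using connected_graph_degree_pos[OF connected assms] by blast
qed

lemma degree_del_verts_pos:
  assumes "v \<in> verts G - S"
  shows "1 \<le> degree (del_verts G S) v"
proof -
  have "\<not> verts G - S \<subseteq> {v}" using card_mono[of "{v}" "verts G - S"] two_le_card_rest by auto
  then show ?thesis
    using connected_graph_degree_pos[of "del_verts G S" v] assms tree_del_verts
    unfolding is_tree_def by auto
qed

lemma sum_degree_del_verts:
  "(\<Sum>v\<in>verts G - S. degree (del_verts G S) v) + 2 \<le> 2 * card (verts G - S)"
  using sum_degree_acyclic_le[of "del_verts G S"] tree_del_verts two_le_card_rest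
  unfolding is_tree_def connected_graph_def by force

lemma degree_powr_ge_S:
  assumes "\<alpha> < 0" "v \<in> S"
  shows "(real (card (verts G)) - 1) powr \<alpha> \<le> real (degree G v) powr \<alpha>"
    and "degree G v \<noteq> card (verts G) - 1 \<Longrightarrow>
      (real (card (verts G)) - 1) powr \<alpha> < real (degree G v) powr \<alpha>"
proof -
  have v: "v \<in> verts G" using assms(2) S_subset by blast
  have "degree G v \<le> card (verts G) - 1" "1 \<le> degree G v"
    using degree_le_card_verts[OF simple v] degree_pos[OF v] by simp_all
  then have le: "real (degree G v) \<le> real (card (verts G)) - 1" and pos: "0 < real (degree G v)"
    by linarith+
  show "(real (card (verts G)) - 1) powr \<alpha> \<le> real (degree G v) powr \<alpha>"
    using powr_mono2'[OF _ pos le] assms(1) by simp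
  assume "degree G v \<noteq> card (verts G) - 1"
  then have "real (degree G v) < real (card (verts G)) - 1"
    using \<open>degree G v \<le> card (verts G) - 1\<close> by linarith
  then show "(real (card (verts G)) - 1) powr \<alpha> < real (degree G v) powr \<alpha>"
    using powr_less_mono2_neg[OF assms(1) pos] by blast
qed

lemma degree_powr_ge_rest:
  assumes "\<alpha> < 0" "v \<in> verts G - S"
  shows "powr_chord \<alpha> (card S) (degree (del_verts G S) v) \<le> real (degree G v) powr \<alpha>"
    and "3 \<le> degree (del_verts G S) v \<Longrightarrow>
      powr_chord \<alpha> (card S) (degree (del_verts G S) v) < real (degree G v) powr \<alpha>"
proof -
  let ?d = "degree (del_verts G S) v"
  have b: "0 < real (card S)" using finite_S S_nonempty by (simp add: card_gt_0_iff)
  have "real (degree G v) \<le> real (card S) + real ?d"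
    using degree_le_card_plus_degree_del_verts[OF simple finite_S] assms(2) by fastforce
  moreover have "0 < real (degree G v)" using degree_pos assms(2) by fastforce
  ultimately have mono: "(real (card S) + real ?d) powr \<alpha> \<le> real (degree G v) powr \<alpha>"
    using powr_mono2' assms(1) by simp
  show "powr_chord \<alpha> (card S) ?d \<le> real (degree G v) powr \<alpha>"
    using powr_chord_le[OF assms(1) b degree_del_verts_pos[OF assms(2)]] mono by linarith
  show "powr_chord \<alpha> (card S) ?d < real (degree G v) powr \<alpha>" if "3 \<le> ?d"
    using powr_chord_less[OF assms(1) b that] mono by linarith
qed

lemma sum_powr_chord_ge:
  assumes "\<alpha> < 0"
  shows "2 * (real (card S) + 1) powr \<alpha> + (real (card (verts G - S)) - 2) * (real (card S) + 2) powr \<alpha>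
    \<le> (\<Sum>v\<in>verts G - S. powr_chord \<alpha> (card S) (degree (del_verts G S) v))"
proof -
  define b where "b = real (card S)"
  define c where "c = (b + 1) powr \<alpha> - (b + 2) powr \<alpha>"
  define m where "m = real (card (verts G - S))"
  define D where "D = (\<Sum>v\<in>verts G - S. real (degree (del_verts G S) v))"
  have "0 < b" using finite_S S_nonempty by (simp add: b_def card_gt_0_iff)
  then have "0 \<le> c" unfolding c_def using powr_less_mono2_neg[OF assms, of "b + 1" "b + 2"] by simp
  moreover have "D + 2 \<le> 2 * m"
    using sum_degree_del_verts unfolding m_def D_def by (simp flip: of_nat_sum)
  ultimately have "c * (D + 2) \<le> c * (2 * m)" by (simp add: mult_left_mono)
  moreover have "powr_chord \<alpha> (card S) d = (b + 2) powr \<alpha> + 2 * c - c * real d" for d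
    unfolding powr_chord_def b_def c_def by (simp add: algebra_simps)
  then have "(\<Sum>v\<in>verts G - S. powr_chord \<alpha> (card S) (degree (del_verts G S) v))
      = m * ((b + 2) powr \<alpha> + 2 * c) - c * D"
    by (simp add: sum_subtractf sum_distrib_left m_def D_def)
  ultimately show ?thesis unfolding b_def [symmetric] m_def [symmetric] c_def [symmetric]
    by (simp add: c_def algebra_simps)
qed

lemma randic0_ge_quasi_tree_bound:
  assumes "\<alpha> < 0"
  shows "quasi_tree_bound \<alpha> (card S) (card (verts G)) \<le> randic0 \<alpha> G"
    and "randic0 \<alpha> G = quasi_tree_bound \<alpha> (card S) (card (verts G)) \<Longrightarrow>
      (\<forall>v\<in>S. degree G v = card (verts G) - 1) \<and> (\<forall>v\<in>verts G - S. degree (del_verts G S) v \<le> 2)"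
proof -
  define lb where "lb v = (if v \<in> S then (real (card (verts G)) - 1) powr \<alpha>
    else powr_chord \<alpha> (card S) (degree (del_verts G S) v))" for v
  have split: "sum f (verts G) = sum f S + sum f (verts G - S)" for f :: "'a \<Rightarrow> real"
    using S_subset simple_graph_finite[OF simple] by (metis sum.subset_diff add.commute)
  have "quasi_tree_bound \<alpha> (card S) (card (verts G))
      = real (card S) * (real (card (verts G)) - 1) powr \<alpha> + 2 * (real (card S) + 1) powr \<alpha>
        + (real (card (verts G - S)) - 2) * (real (card S) + 2) powr \<alpha>"
    unfolding quasi_tree_bound_def card_verts by (simp add: add.commute)
  also have "\<dots> \<le> sum lb (verts G)"
    using sum_powr_chord_ge[OF assms] unfolding split lb_def by simp
  finally have bound_le: "quasi_tree_bound \<alpha> (card S) (card (verts G)) \<le> sum lb (verts G)" .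
  have lb_le: "\<forall>v\<in>verts G. lb v \<le> real (degree G v) powr \<alpha>"
    using degree_powr_ge_S(1)[OF assms] degree_powr_ge_rest(1)[OF assms] by (simp add: lb_def)
  then have "sum lb (verts G) \<le> randic0 \<alpha> G" unfolding randic0_def by (simp add: sum_mono)
  with bound_le show "quasi_tree_bound \<alpha> (card S) (card (verts G)) \<le> randic0 \<alpha> G" by simp
  assume eq: "randic0 \<alpha> G = quasi_tree_bound \<alpha> (card S) (card (verts G))"
  show "(\<forall>v\<in>S. degree G v = card (verts G) - 1) \<and> (\<forall>v\<in>verts G - S. degree (del_verts G S) v \<le> 2)"
  proof (rule ccontr)
    assume "\<not> ?thesis"
    then have "\<exists>v\<in>verts G. lb v < real (degree G v) powr \<alpha>"
      using S_subset degree_powr_ge_S(2)[OF assms] degree_powr_ge_rest(2)[OF assms]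
      by (fastforce simp: lb_def not_le)
    with lb_le have "sum lb (verts G) < randic0 \<alpha> G"
      unfolding randic0_def by (intro sum_strict_mono_ex1 simple_graph_finite[OF simple])
    with bound_le eq show False by simp
  qed
qed

lemma randic0_eq_quasi_tree_bound_iff:
  assumes "\<alpha> < 0"
  shows "randic0 \<alpha> G = quasi_tree_bound \<alpha> (card S) (card (verts G)) \<longleftrightarrow>
    graph_iso G (graph_join (complete_graph (card S)) (path_graph (card (verts G) - card S)))"
proof
  have m: "card (verts G) - card S = card (verts G - S)" using card_verts by simp
  assume "randic0 \<alpha> G = quasi_tree_bound \<alpha> (card S) (card (verts G))"
  then have full: "\<forall>v\<in>S. degree G v = card (verts G) - 1"
    and path: "\<forall>v\<in>verts G - S. degree (del_verts G S) v \<le> 2"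
    using randic0_ge_quasi_tree_bound(2)[OF assms] by auto
  have "\<forall>u\<in>S. \<forall>v\<in>verts G. u \<noteq> v \<longrightarrow> adj G u v"
    using full S_subset degree_eq_card_verts_imp_adj[OF simple] by blast
  moreover have "graph_iso (del_verts G S) (path_graph (card (verts G - S)))"
    using tree_max_degree_two_iso_path[OF tree_del_verts] path two_le_card_rest by simp
  ultimately show "graph_iso G (graph_join (complete_graph (card S)) (path_graph (card (verts G) - card S)))"
    unfolding m using graph_iso_join_complete[OF simple S_subset] by blast
next
  assume "graph_iso G (graph_join (complete_graph (card S)) (path_graph (card (verts G) - card S)))"
  then have "randic0 \<alpha> G
      = randic0 \<alpha> (graph_join (complete_graph (card S)) (path_graph (card (verts G) - card S)))"
    by (rule randic0_graph_iso)
  then show "randic0 \<alpha> G = quasi_tree_bound \<alpha> (card S) (card (verts G))"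
    using randic0_join_complete_path[of "card (verts G) - card S" \<alpha> "card S"]
      card_verts two_le_card_rest
    by (simp add: quasi_tree_bound_def of_nat_diff add.commute)
qed

end

lemma quasi_tree_obtain_tree_deletion:
  assumes "quasi_tree k G" "1 \<le> k"
  obtains S where "tree_deletion G S" "card S = k"
proof -
  obtain S where S: "S \<subset> verts G" "card S = k" "is_tree (del_verts G S)"
    using assms(1) unfolding quasi_tree_def by blast
  have minimal: "\<not> is_tree (del_verts G S')" if "S' \<subset> verts G" "card S' = k - 1" for S'
    using assms(1) that unfolding quasi_tree_def by blast
  have conn: "connected_graph G" using assms(1) unfolding quasi_tree_def by blast
  have simple: "simple_graph G" using conn by (rule connected_graph_simple)
  have fin: "finite S" using S(1) simple_graph_finite[OF simple] by (meson finite_subset psubset_imp_subset)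
  have "S \<noteq> {}" using S(2) assms(2) by auto
  moreover have "2 \<le> card (verts G - S)"
  proof (rule ccontr)
    assume "\<not> 2 \<le> card (verts G - S)"
    moreover have "card (verts G - S) \<noteq> 0"
      using S(1) simple_graph_finite[OF simple] by auto
    ultimately have "card (verts G - S) = 1" by linarith
    then obtain w where w: "verts G - S = {w}" by (rule card_1_singletonE)
    obtain s where "s \<in> S" using \<open>S \<noteq> {}\<close> by blast
    then have "1 \<le> degree G w" using connected_graph_degree_pos[OF conn, of w s] w S(1) by auto
    then have "neighbours G w \<noteq> {}" by (auto simp: degree_eq_card_neighbours)
    then obtain u where u: "adj G u w" "u \<in> verts G" unfolding neighbours_def by blast
    then have uS: "u \<in> S" using w simple_graph_adjD(3)[OF simple u(1)] by blast
    have "w \<notin> S" using w by blast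
    have "verts (del_verts G (S - {u})) = {w, u}" using w uS S(1) by auto
    moreover have "adj (del_verts G (S - {u})) w u"
      using u(1) \<open>w \<notin> S\<close> by (simp add: adj_del_verts adj_commute)
    ultimately have "is_tree (del_verts G (S - {u}))"
      by (intro is_tree_two_verts simple_graph_del_verts simple)
    moreover have "S - {u} \<subset> verts G" "card (S - {u}) = k - 1" using S uS fin by auto
    ultimately show False using minimal by blast
  qed
  ultimately have "tree_deletion G S"
    using conn S by unfold_locales auto
  then show ?thesis using S(2) by (rule that)
qed

theorem mainTheorem1:
  fixes k n :: nat and \<alpha> :: real and G :: "'a graph"
  assumes "k \<ge> 1" and "n \<ge> 3" and "\<alpha> < 0" and "G \<in> T_class k n"
  shows "randic0 \<alpha> G \<ge> real k * (real n - 1) powr \<alpha> + 2 * real (k + 1) powr \<alpha>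
            + (real n - real k - 2) * real (k + 2) powr \<alpha>
     \<and> (randic0 \<alpha> G = real k * (real n - 1) powr \<alpha> + 2 * real (k + 1) powr \<alpha>
            + (real n - real k - 2) * real (k + 2) powr \<alpha>
         \<longleftrightarrow> graph_iso G (graph_join (complete_graph k) (path_graph (n - k))))"
proof -
  have "quasi_tree k G" and n: "card (verts G) = n"
    using assms(4) unfolding T_class_def by auto
  then obtain S where S: "tree_deletion G S" and k: "card S = k"
    using assms(1) by (blast elim: quasi_tree_obtain_tree_deletion)
  show ?thesis
    using tree_deletion.randic0_ge_quasi_tree_bound(1)[OF S assms(3)]
      tree_deletion.randic0_eq_quasi_tree_bound_iff[OF S assms(3)]
    unfolding k n quasi_tree_bound_def by simp
qed

end
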